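(* Let $Y$ be a discrete random variable taking values in a set $\mathcal{Y}$, and let $B=(B_0,\dots,B_{m-1})$ be a random vector taking values in $\{0,1\}^m$. Assume $\mathbf{H}(Y\mid B)=0$ and that the components of $B$ are independent conditionally on $Y$. For $y_n\in\mathcal{Y}$ with $P(Y=y_n)>0$ define $\varphi^{(n)}\in\{-1,0,1\}^m$ by $\varphi^{(n)}_i=0$ if $P(B_i=1\mid Y=y_n)\in(0,1)$, $\varphi^{(n)}_i=-1$ if $P(B_i=1\mid Y=y_n)=0$, and $\varphi^{(n)}_i=1$ if $P(B_i=1\mid Y=y_n)=1$. Then for any $y_n,y_l\in\mathcal{Y}$ with $P(Y=y_n)>0$, $P(Y=y_l)>0$ and $y_l\neq y_n$, there exists an index $i$ with $\varphi^{(n)}_i=-\varphi^{(l)}_i\neq 0$.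
   Context: $\mathbf{H}(Y\mid B)$ is the conditional Shannon entropy; conditional independence of the components means $P(B=b\mid Y=y)=\prod_i P(B_i=b_i\mid Y=y)$ for all $b$ and all $y$ with $P(Y=y)>0$. *)

theory Defs
  imports "HOL-Probability.Probability"
begin

text \<open>The joint distribution of (Y, B) is a pmf on pairs (y, b), where b is a bool list
  (True = 1, False = 0) of length m.\<close>

definition PY :: "('y \<times> bool list) pmf \<Rightarrow> 'y \<Rightarrow> real" where
  "PY p y = measure_pmf.prob p {z. fst z = y}"

definition cprobBi :: "('y \<times> bool list) pmf \<Rightarrow> nat \<Rightarrow> bool \<Rightarrow> 'y \<Rightarrow> real" where
  "cprobBi p i v y = measure_pmf.prob p {z. fst z = y \<and> snd z ! i = v} / PY p y"

definition cprobB :: "('y \<times> bool list) pmf \<Rightarrow> bool list \<Rightarrow> 'y \<Rightarrow> real" where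
  "cprobB p b y = measure_pmf.prob p {z. fst z = y \<and> snd z = b} / PY p y"

text \<open>Conditional Shannon entropy H(Y|B) = E[- log P(Y | B)] (natural log; the base is
  irrelevant for the statement H = 0), valued in ennreal so that it may be infinite.\<close>
definition cond_entropy_YB :: "('y \<times> bool list) pmf \<Rightarrow> ennreal" where
  "cond_entropy_YB p =
     (\<integral>\<^sup>+ z. ennreal (- ln (pmf p z / pmf (map_pmf snd p) (snd z))) \<partial>measure_pmf p)"

definition cond_indep_components :: "('y \<times> bool list) pmf \<Rightarrow> nat \<Rightarrow> bool" where
  "cond_indep_components p m \<longleftrightarrow>
     (\<forall>y b. PY p y > 0 \<longrightarrow> length b = m \<longrightarrow>
        cprobB p b y = (\<Prod>i<m. cprobBi p i (b ! i) y))"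

definition phi :: "('y \<times> bool list) pmf \<Rightarrow> nat \<Rightarrow> 'y \<Rightarrow> int list" where
  "phi p m y = map (\<lambda>i. if cprobBi p i True y = 0 then -1
                         else if cprobBi p i True y = 1 then 1 else 0) [0..<m]"

end

theory Submission
  imports Defs
begin

text \<open>If no index separates the two patterns, every bit B_i has a value of positive conditional
  probability under both y_n and y_l. By conditional independence the word b made of these
  values occurs jointly with y_n and with y_l. But H(Y|B) = 0 forces every word in the support
  to determine Y, so y_n = y_l.\<close>

lemma cprobBi_nonneg: "cprobBi p i v y \<ge> 0"
  unfolding cprobBi_def PY_def by simp

lemma cprobBi_True_plus_False:
  assumes "PY p y > 0"
  shows "cprobBi p i True y + cprobBi p i False y = 1"
proof -
  let ?A = "\<lambda>v. {z. fst z = y \<and> snd z ! i = v}"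
  have "measure_pmf.prob p (?A True) + measure_pmf.prob p (?A False)
      = measure_pmf.prob p (?A True \<union> ?A False)"
    by (subst measure_pmf.finite_measure_Union) auto
  also have "?A True \<union> ?A False = {z. fst z = y}" by auto
  finally show ?thesis
    using assms unfolding cprobBi_def PY_def by (simp add: add_divide_distrib[symmetric])
qed

lemma nth_phi:
  assumes "i < m"
  shows "phi p m y ! i = (if cprobBi p i True y = 0 then -1
                          else if cprobBi p i True y = 1 then 1 else 0)"
  using assms unfolding phi_def by simp

lemma common_bit_if_phi_not_opposite:
  assumes "PY p y > 0" and "PY p y' > 0" and "i < m"
    and "\<not> (phi p m y ! i = - (phi p m y' ! i) \<and> phi p m y ! i \<noteq> 0)"
  shows "\<exists>v. cprobBi p i v y > 0 \<and> cprobBi p i v y' > 0"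
  using assms(4) cprobBi_True_plus_False[OF assms(1), of i] cprobBi_True_plus_False[OF assms(2), of i]
    cprobBi_nonneg[of p i _ y] cprobBi_nonneg[of p i _ y']
  unfolding nth_phi[OF assms(3)] by (smt (verit))

lemma pair_in_set_pmf_if_cprobB_pos:
  assumes "cprobB p b y > 0"
  shows "(y, b) \<in> set_pmf p"
proof -
  have "{z. fst z = y \<and> snd z = b} = {(y, b)}" by auto
  then have "cprobB p b y = pmf p (y, b) / PY p y"
    unfolding cprobB_def by (simp add: measure_pmf_single)
  with assms show ?thesis by (auto simp: set_pmf_iff)
qed

lemma pair_in_set_pmf_if_cprobBi_pos:
  assumes "cond_indep_components p m" and "PY p y > 0" and "length b = m"
    and "\<And>i. i < m \<Longrightarrow> cprobBi p i (b ! i) y > 0"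
  shows "(y, b) \<in> set_pmf p"
proof (rule pair_in_set_pmf_if_cprobB_pos)
  show "cprobB p b y > 0"
    using assms unfolding cond_indep_components_def by (auto intro!: prod_pos)
qed

lemma pmf_ge_pmf_snd_if_cond_entropy_YB_zero:
  assumes "cond_entropy_YB p = 0" and "z \<in> set_pmf p"
  shows "pmf p z \<ge> pmf (map_pmf snd p) (snd z)"
proof -
  let ?q = "pmf p z / pmf (map_pmf snd p) (snd z)"
  have "AE z in measure_pmf p. ennreal (- ln (pmf p z / pmf (map_pmf snd p) (snd z))) = 0"
    using assms(1) unfolding cond_entropy_YB_def by (subst nn_integral_0_iff_AE[symmetric]) auto
  then have "ln ?q \<ge> 0"
    using assms(2) by (simp add: AE_measure_pmf_iff ennreal_eq_0_iff)
  moreover have pos: "pmf (map_pmf snd p) (snd z) > 0"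
    using assms(2) by (simp add: pmf_positive)
  moreover have "pmf p z > 0"
    using assms(2) by (simp add: pmf_positive)
  ultimately have "?q \<ge> 1" using ln_ge_zero_iff by force
  with pos show ?thesis by (simp add: le_divide_eq)
qed

lemma fst_unique_if_cond_entropy_YB_zero:
  assumes "cond_entropy_YB p = 0" and "(y, b) \<in> set_pmf p" and "(y', b) \<in> set_pmf p"
  shows "y' = y"
proof (rule ccontr)
  assume "y' \<noteq> y"
  then have "pmf p (y, b) + pmf p (y', b) = measure_pmf.prob p {(y, b), (y', b)}"
    by (simp add: measure_measure_pmf_finite)
  also have "\<dots> \<le> measure_pmf.prob p (snd -` {b})"
    by (rule measure_pmf.finite_measure_mono) auto
  also have "\<dots> = pmf (map_pmf snd p) b"
    by (simp add: pmf_map)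
  also have "\<dots> \<le> pmf p (y, b)"
    using pmf_ge_pmf_snd_if_cond_entropy_YB_zero[OF assms(1,2)] by simp
  finally show False
    using assms(3) by (simp add: set_pmf_iff)
qed

theorem lemma3:
  fixes p :: "('y \<times> bool list) pmf" and m :: nat and yn yl :: 'y
  assumes "\<forall>z \<in> set_pmf p. length (snd z) = m"
    and "cond_entropy_YB p = 0"
    and "cond_indep_components p m"
    and "PY p yn > 0" and "PY p yl > 0" and "yl \<noteq> yn"
  shows "\<exists>i<m. phi p m yn ! i = - (phi p m yl ! i) \<and> phi p m yn ! i \<noteq> 0"
proof (rule ccontr)
  assume "\<not> ?thesis"
  then have "\<forall>i<m. \<exists>v. cprobBi p i v yn > 0 \<and> cprobBi p i v yl > 0"
    using common_bit_if_phi_not_opposite[OF assms(4,5)] by blast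
  then obtain v where v: "\<And>i. i < m \<Longrightarrow> cprobBi p i (v i) yn > 0 \<and> cprobBi p i (v i) yl > 0"
    by metis
  define b where "b = map v [0..<m]"
  have "length b = m" and b: "\<And>i. i < m \<Longrightarrow> b ! i = v i"
    unfolding b_def by simp_all
  have "(yn, b) \<in> set_pmf p" and "(yl, b) \<in> set_pmf p"
    using pair_in_set_pmf_if_cprobBi_pos[OF assms(3) _ \<open>length b = m\<close>] assms(4,5) v b by auto
  then show False
    using fst_unique_if_cond_entropy_YB_zero[OF assms(2)] assms(6) by blast
qed

end
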